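(* Let $0<\underline\beta<\bar\beta$, $\alpha,\xi>0$, and let $\varphi$, $\omega$ and $\mathcal{J}(\beta,D)$ be as in the context. Then there exists a parameter set $\mathcal{P}(\underline\beta,\bar\beta)$ (not depending on $D$) such that for every positive even integer $D$ and every $\beta\in[\underline\beta,\bar\beta]$, $\mathcal{J}(\beta,D)\subset\mathcal{H}(\beta,\mathcal{P}(\underline\beta,\bar\beta))$.
   Context: $\psi(x)=\pi^{-1/2}e^{-x^2}$. For $\beta>0$, $r$ is the largest integer strictly less than $\beta$. A parameter set $\mathcal{P}=\{\gamma,l^+,L,\varepsilon,C,\alpha,\xi,M\}$ consists of a polynomial $L$ and constants; $\mathcal{H}(\beta,\mathcal{P})$ is the set of probability densities $f$ on $\mathbb{R}$ with: $\ln f$ $r$ times differentiable, $|(\ln f)^{(r)}(x)-(\ln f)^{(r)}(y)|\le r!L(x)|y-x|^{\beta-r}$ when $|x-y|\le\gamma$, $|(\ln f)^{(j)}(0)|\le l^+$ ($j=0..r$); $\int|(\ln f)^{(j)}|^{(2\beta+\varepsilon)/j}f\le C$ ($j=1..r$), $\int|L|^{2+\varepsilon/\beta}f\le C$; $f\le M\psi$; $f>0$, nondecreasing on $(-\infty,-\alpha)$, nonincreasing on $(\alpha,\infty)$, $f\ge\xi$ on $[-\alpha,\alpha]$. Construction: $\varphi$ infinitely differentiable, supported in $(1/4,3/4)$, $\int\varphi=0$, $\int\varphi^2=1$; $A=\max_{0\le k\le r+1}\|\varphi^{(k)}\|_\infty>1$; for $D$ a positive even integer and $j=1,\dots,D$,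 $\varphi_j(x)=\frac{\xi D^{-\beta}}{A}\varphi\big(\frac D\alpha(x+\frac\alpha2)-(j-1)\big)$. $\mathcal{T}(\alpha,\xi)$: functions $\omega:\mathbb{R}\to\mathbb{R}^+$ nondecreasing on $(-\infty,-\alpha/2)$, nonincreasing on $(\alpha/2,\infty)$, $\omega=2\xi$ on $[-3\alpha/4,3\alpha/4]$, $\omega(\pm\alpha)=\xi$. Fix $\tilde{\mathcal P}=\{\alpha/4,\ln(2\xi),\tilde L,\tilde\varepsilon,\tilde C,\alpha,\xi,\tilde M\}$ and $\omega\in\mathcal{T}(\alpha,\xi)\cap\mathcal{H}(\beta,\tilde{\mathcal P})$ for all $\beta\in[\underline\beta,\bar\beta]$. For $\theta\in\{0,1\}^D$, $f_\theta=\omega+\sum_{j=1}^D(2\theta_j-1)\varphi_j$, and $\mathcal{J}(\beta,D)=\{f_\theta:\theta\in\{0,1\}^D\}$. *)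

theory Defs
  imports "HOL-Analysis.Analysis" "HOL-Computational_Algebra.Polynomial"
begin

definition psi :: "real \<Rightarrow> real" where
  "psi x = exp (- (x^2)) / sqrt pi"

text \<open>r = largest integer strictly less than beta (beta > 0).\<close>
definition rr :: "real \<Rightarrow> nat" where
  "rr beta = nat (\<lceil>beta\<rceil> - 1)"

definition dj :: "nat \<Rightarrow> (real \<Rightarrow> real) \<Rightarrow> real \<Rightarrow> real" where
  "dj j g = (deriv ^^ j) g"

definition times_differentiable :: "nat \<Rightarrow> (real \<Rightarrow> real) \<Rightarrow> bool" where
  "times_differentiable r g \<longleftrightarrow> (\<forall>j<r. \<forall>x. dj j g differentiable at x)"

definition smooth_fun :: "(real \<Rightarrow> real) \<Rightarrow> bool" where
  "smooth_fun g \<longleftrightarrow> (\<forall>j x. dj j g differentiable at x)"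

record params =
  gam :: real
  lplus :: real
  Lp :: "real poly"
  eps :: real
  Cc :: real
  alph :: real
  xi :: real
  Mm :: real

text \<open>Constants of a parameter set (l+ is allowed to be any real, e.g. ln(2 xi)).\<close>
definition valid_params :: "params \<Rightarrow> bool" where
  "valid_params P \<longleftrightarrow> gam P > 0 \<and> eps P > 0 \<and> Cc P > 0 \<and> alph P > 0 \<and> xi P > 0 \<and> Mm P > 0"

definition is_density :: "(real \<Rightarrow> real) \<Rightarrow> bool" where
  "is_density f \<longleftrightarrow> f \<in> borel_measurable borel \<and> (\<forall>x. f x \<ge> 0)
      \<and> (\<integral>\<^sup>+ x. ennreal (f x) \<partial>lborel) = 1"

definition HH :: "real \<Rightarrow> params \<Rightarrow> (real \<Rightarrow> real) set" where
  "HH beta P = {f. is_density f \<and>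
     (let g = (\<lambda>x. ln (f x)); r = rr beta; L = (\<lambda>x. poly (Lp P) x) in
       times_differentiable r g
     \<and> (\<forall>x y. \<bar>x - y\<bar> \<le> gam P \<longrightarrow>
          \<bar>dj r g x - dj r g y\<bar> \<le> fact r * L x * \<bar>y - x\<bar> powr (beta - real r))
     \<and> (\<forall>j\<le>r. \<bar>dj j g 0\<bar> \<le> lplus P)
     \<and> (\<forall>j\<in>{1..r}. (\<integral>\<^sup>+ x. ennreal (\<bar>dj j g x\<bar> powr ((2 * beta + eps P) / real j) * f x) \<partial>lborel)
            \<le> ennreal (Cc P))
     \<and> (\<integral>\<^sup>+ x. ennreal (\<bar>L x\<bar> powr (2 + eps P / beta) * f x) \<partial>lborel) \<le> ennreal (Cc P)
     \<and> (\<forall>x. f x \<le> Mm P * psi x)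
     \<and> (\<forall>x. f x > 0)
     \<and> mono_on {..< - alph P} f
     \<and> antimono_on {alph P <..} f
     \<and> (\<forall>x\<in>{- alph P .. alph P}. f x \<ge> xi P))}"

definition supnorm :: "(real \<Rightarrow> real) \<Rightarrow> real" where
  "supnorm g = (SUP x. \<bar>g x\<bar>)"

definition AA :: "(real \<Rightarrow> real) \<Rightarrow> real \<Rightarrow> real" where
  "AA phi beta = Max ((\<lambda>k. supnorm (dj k phi)) ` {0..rr beta + 1})"

definition phij :: "(real \<Rightarrow> real) \<Rightarrow> real \<Rightarrow> real \<Rightarrow> real \<Rightarrow> nat \<Rightarrow> nat \<Rightarrow> real \<Rightarrow> real" where
  "phij phi alpha xi' beta D j x =
     xi' * real D powr (- beta) / AA phi beta * phi (real D / alpha * (x + alpha / 2) - (real j - 1))"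

definition TT :: "real \<Rightarrow> real \<Rightarrow> (real \<Rightarrow> real) set" where
  "TT alpha xi' = {w. (\<forall>x. w x \<ge> 0) \<and> mono_on {..< - alpha / 2} w \<and> antimono_on {alpha / 2 <..} w
      \<and> (\<forall>x\<in>{- 3 * alpha / 4 .. 3 * alpha / 4}. w x = 2 * xi')
      \<and> w alpha = xi' \<and> w (- alpha) = xi'}"

definition ftheta :: "(real \<Rightarrow> real) \<Rightarrow> (real \<Rightarrow> real) \<Rightarrow> real \<Rightarrow> real \<Rightarrow> real \<Rightarrow> nat \<Rightarrow> (nat \<Rightarrow> bool) \<Rightarrow> real \<Rightarrow> real" where
  "ftheta w phi alpha xi' beta D theta x =
     w x + (\<Sum>j = 1..D. (if theta j then 1 else -1) * phij phi alpha xi' beta D j x)"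

definition JJ :: "(real \<Rightarrow> real) \<Rightarrow> (real \<Rightarrow> real) \<Rightarrow> real \<Rightarrow> real \<Rightarrow> real \<Rightarrow> nat \<Rightarrow> (real \<Rightarrow> real) set" where
  "JJ w phi alpha xi' beta D = {ftheta w phi alpha xi' beta D theta | theta. True}"

end

theory Submission
  imports Defs
begin

text \<open>
  Write f = omega + 2 xi u, where u is a signed sum of D rescaled copies of phi of height
  D^(-beta)/(2A) with pairwise disjoint supports inside [-alpha/2, alpha/2], where omega = 2 xi.
  Hence |u^(k)| <= D^(-beta) (D/alpha)^k / 2 for k <= r + 1, in particular |u| <= 1/2, and
  ln f = ln omega + ln (1 + u). The recursion (1/(1+u))' = -u' (1/(1+u))^2 bounds the derivatives
  of ln (1 + u) up to order r + 1 by a constant times D^(-beta) (D/alpha)^k. Since k <= r < beta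
  these bounds are uniform in D, and interpolating between the bounds of order r and r + 1 gives a
  Hoelder constant for the r-th derivative that is uniform in D as well. As 0 < f <= 3/2 omega and
  the integral of u vanishes, the remaining conditions pass from omega to f with enlarged constants.
\<close>

section \<open>Iterated derivatives of smooth functions\<close>

lemma dj_0 [simp]: "dj 0 f = f"
  by (simp add: dj_def)

lemma dj_Suc: "dj (Suc k) f = deriv (dj k f)"
  by (simp add: dj_def)

lemma dj_Suc_right: "dj (Suc k) f = dj k (deriv f)"
  by (simp add: dj_def funpow_Suc_right del: funpow.simps)

lemma dj_dj: "dj j (dj k f) = dj (j + k) f"
  by (simp add: dj_def funpow_add)

lemma has_real_derivative_deriv:
  "(f :: real \<Rightarrow> real) differentiable at x \<Longrightarrow> (f has_real_derivative deriv f x) (at x)"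
  using DERIV_deriv_iff_real_differentiable by blast

lemma smooth_fun_differentiable: "smooth_fun f \<Longrightarrow> f differentiable at x"
  unfolding smooth_fun_def by (metis dj_0)

lemma smooth_fun_dj_differentiable: "smooth_fun f \<Longrightarrow> dj k f differentiable at x"
  unfolding smooth_fun_def by blast

lemma smooth_fun_deriv: "smooth_fun f \<Longrightarrow> smooth_fun (deriv f)"
  unfolding smooth_fun_def by (metis dj_Suc_right)

lemma smooth_funI_deriv:
  "(\<And>x. f differentiable at x) \<Longrightarrow> smooth_fun (deriv f) \<Longrightarrow> smooth_fun f"
  unfolding smooth_fun_def by (metis dj_0 dj_Suc_right not0_implies_Suc)

lemma smooth_fun_if_deriv_closed:
  assumes closed: "\<And>g. g \<in> S \<Longrightarrow> (\<forall>x. g differentiable at x) \<and> deriv g \<in> S" and "f \<in> S"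
  shows "smooth_fun f"
proof -
  have "\<forall>g\<in>S. dj j g \<in> S" for j
    by (induction j) (auto simp: dj_Suc_right closed)
  with closed \<open>f \<in> S\<close> show ?thesis
    unfolding smooth_fun_def by blast
qed

text \<open>
  Closed under \<open>deriv\<close> as soon as \<open>q'\<close> lies in it, so all members are smooth: this gives
  smoothness of products and of \<open>1/(1 + u)\<close> without a Leibniz formula.
\<close>
inductive_set smooth_ring :: "(real \<Rightarrow> real) \<Rightarrow> (real \<Rightarrow> real) set" for q where
  smooth: "smooth_fun f \<Longrightarrow> f \<in> smooth_ring q"
| generator: "q \<in> smooth_ring q"
| add: "f \<in> smooth_ring q \<Longrightarrow> g \<in> smooth_ring q \<Longrightarrow> (\<lambda>x. f x + g x) \<in> smooth_ring q"
| mult: "f \<in> smooth_ring q \<Longrightarrow> g \<in> smooth_ring q \<Longrightarrow> (\<lambda>x. f x * g x) \<in> smooth_ring q"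

lemma smooth_ring_deriv_closed:
  assumes q: "\<And>x. q differentiable at x" "deriv q \<in> smooth_ring q"
  shows "f \<in> smooth_ring q \<Longrightarrow> (\<forall>x. f differentiable at x) \<and> deriv f \<in> smooth_ring q"
proof (induction f rule: smooth_ring.induct)
  case (smooth f)
  then show ?case
    by (auto intro: smooth_ring.smooth smooth_fun_differentiable smooth_fun_deriv)
next
  case generator
  then show ?case using q by auto
next
  case (add f g)
  have "deriv (\<lambda>x. f x + g x) = (\<lambda>x. deriv f x + deriv g x)"
    using add by (auto intro!: DERIV_imp_deriv derivative_intros has_real_derivative_deriv)
  then show ?case using add by (auto intro: smooth_ring.add)
next
  case (mult f g)
  have "((\<lambda>x. f x * g x) has_real_derivative deriv f x * g x + deriv g x * f x) (at x)" for x
    using mult by (intro DERIV_mult has_real_derivative_deriv) auto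
  then have "deriv (\<lambda>x. f x * g x) = (\<lambda>x. deriv f x * g x + f x * deriv g x)"
    by (auto intro!: DERIV_imp_deriv simp: mult.commute)
  then show ?case using mult by (auto intro!: smooth_ring.add smooth_ring.mult)
qed

lemma smooth_ring_smooth_fun:
  assumes "\<And>x. q differentiable at x" "deriv q \<in> smooth_ring q" "f \<in> smooth_ring q"
  shows "smooth_fun f"
  using smooth_fun_if_deriv_closed[of "smooth_ring q" f] smooth_ring_deriv_closed[OF assms(1,2)] assms(3)
  by blast

lemma smooth_fun_add: "smooth_fun f \<Longrightarrow> smooth_fun g \<Longrightarrow> smooth_fun (\<lambda>x. f x + g x)"
  using smooth_ring_smooth_fun[of "\<lambda>x. 0" "\<lambda>x. f x + g x"] by (auto intro: smooth_ring.intros)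

lemma smooth_fun_mult: "smooth_fun f \<Longrightarrow> smooth_fun g \<Longrightarrow> smooth_fun (\<lambda>x. f x * g x)"
  using smooth_ring_smooth_fun[of "\<lambda>x. 0" "\<lambda>x. f x * g x"] by (auto intro: smooth_ring.intros)

lemma smooth_fun_const: "smooth_fun (\<lambda>x. c)"
proof (rule smooth_fun_if_deriv_closed[of "range (\<lambda>d x. d)"])
  fix f :: "real \<Rightarrow> real"
  assume "f \<in> range (\<lambda>d x. d)"
  then show "(\<forall>x. f differentiable at x) \<and> deriv f \<in> range (\<lambda>d x. d)"
    by auto
qed auto

lemma smooth_fun_sum:
  "finite A \<Longrightarrow> (\<And>i. i \<in> A \<Longrightarrow> smooth_fun (f i)) \<Longrightarrow> smooth_fun (\<lambda>x. \<Sum>i\<in>A. f i x)"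
  by (induction A rule: finite_induct) (auto intro: smooth_fun_add smooth_fun_const)

lemma deriv_affine_comp:
  assumes "smooth_fun f"
  shows "deriv (\<lambda>x. c * f (a * x + b)) = (\<lambda>x. (c * a) * deriv f (a * x + b))"
    and "(\<lambda>x. c * f (a * x + b)) differentiable at x"
proof -
  have *: "((\<lambda>x. c * f (a * x + b)) has_real_derivative c * (deriv f (a * x + b) * a)) (at x)" for x
    using smooth_fun_differentiable[OF assms]
    by (auto intro!: derivative_eq_intros DERIV_chain2[where f = f] has_real_derivative_deriv)
  then show "deriv (\<lambda>x. c * f (a * x + b)) = (\<lambda>x. (c * a) * deriv f (a * x + b))"
    by (auto intro!: DERIV_imp_deriv simp: algebra_simps)
  show "(\<lambda>x. c * f (a * x + b)) differentiable at x"
    using * real_differentiable_def by blast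
qed

lemma smooth_fun_affine_comp:
  assumes "smooth_fun f"
  shows "smooth_fun (\<lambda>x. c * f (a * x + b))"
proof (rule smooth_fun_if_deriv_closed)
  let ?S = "{(\<lambda>x. c * g (a * x + b)) | c g. smooth_fun g}"
  show "(\<forall>x. h differentiable at x) \<and> deriv h \<in> ?S" if "h \<in> ?S" for h
    using that deriv_affine_comp smooth_fun_deriv by blast
  show "(\<lambda>x. c * f (a * x + b)) \<in> ?S"
    using assms by blast
qed

lemma smooth_fun_cmult: "smooth_fun f \<Longrightarrow> smooth_fun (\<lambda>x. c * f x)"
  using smooth_fun_affine_comp[of f c 1 0] by simp

lemma dj_affine_comp:
  assumes "smooth_fun f"
  shows "dj k (\<lambda>x. c * f (a * x + b)) = (\<lambda>x. c * a ^ k * dj k f (a * x + b))"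
  using assms
proof (induction k arbitrary: c f)
  case 0
  then show ?case by simp
next
  case (Suc k)
  have "dj (Suc k) (\<lambda>x. c * f (a * x + b)) = dj k (\<lambda>x. (c * a) * deriv f (a * x + b))"
    by (simp add: dj_Suc_right deriv_affine_comp(1)[OF Suc.prems])
  then show ?case
    using Suc.IH[of "deriv f" "c * a"] smooth_fun_deriv[OF Suc.prems]
    by (simp add: dj_Suc_right[of k f] algebra_simps)
qed

lemma dj_cmult: "smooth_fun f \<Longrightarrow> dj k (\<lambda>x. c * f x) = (\<lambda>x. c * dj k f x)"
  using dj_affine_comp[of f k c 1 0] by simp

lemma dj_add:
  assumes "smooth_fun f" "smooth_fun g"
  shows "dj k (\<lambda>x. f x + g x) = (\<lambda>x. dj k f x + dj k g x)"
  using assms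
proof (induction k arbitrary: f g)
  case 0
  then show ?case by simp
next
  case (Suc k)
  have "deriv (\<lambda>x. f x + g x) = (\<lambda>x. deriv f x + deriv g x)"
    using Suc.prems
    by (auto intro!: DERIV_imp_deriv derivative_intros has_real_derivative_deriv smooth_fun_differentiable)
  then show ?case
    using Suc.IH[of "deriv f" "deriv g"] Suc.prems by (simp add: dj_Suc_right smooth_fun_deriv)
qed

lemma dj_sum:
  "finite A \<Longrightarrow> (\<And>i. i \<in> A \<Longrightarrow> smooth_fun (f i)) \<Longrightarrow>
    dj k (\<lambda>x. \<Sum>i\<in>A. f i x) = (\<lambda>x. \<Sum>i\<in>A. dj k (f i) x)"
proof (induction A rule: finite_induct)
  case empty
  then show ?case using dj_cmult[OF smooth_fun_const[of 0], of k 0] by simp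
next
  case (insert a A)
  then show ?case by (simp add: dj_add smooth_fun_sum)
qed

lemma dj_add_times_differentiable:
  assumes "times_differentiable r g" "smooth_fun h" "j \<le> r"
  shows "dj j (\<lambda>x. g x + h x) = (\<lambda>x. dj j g x + dj j h x)"
  using \<open>j \<le> r\<close>
proof (induction j)
  case 0
  then show ?case by simp
next
  case (Suc j)
  have "deriv (\<lambda>x. dj j g x + dj j h x) x = deriv (dj j g) x + deriv (dj j h) x" for x
  proof -
    have "dj j g differentiable at x"
      using assms(1) Suc.prems unfolding times_differentiable_def by simp
    then show ?thesis
      using smooth_fun_dj_differentiable[OF assms(2)]
      by (intro DERIV_imp_deriv DERIV_add has_real_derivative_deriv)
  qed
  then show ?case
    using Suc by (simp add: dj_Suc)
qed

lemma deriv_mult_smooth: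
  assumes "smooth_fun v" "smooth_fun w"
  shows "deriv (\<lambda>x. v x * w x) = (\<lambda>x. deriv v x * w x + v x * deriv w x)"
proof -
  have "((\<lambda>x. v x * w x) has_real_derivative deriv v x * w x + deriv w x * v x) (at x)" for x
    using assms by (intro DERIV_mult has_real_derivative_deriv smooth_fun_differentiable)
  then show ?thesis
    by (auto intro!: DERIV_imp_deriv simp: mult.commute)
qed

text \<open>Each differentiation of a product doubles the number of Leibniz terms.\<close>
lemma abs_dj_mult_le:
  fixes L :: real
  assumes "L \<ge> 0" "smooth_fun v" "smooth_fun w"
    and "\<forall>i\<le>k. \<forall>x. \<bar>dj i v x\<bar> \<le> a * L ^ i" "\<forall>i\<le>k. \<forall>x. \<bar>dj i w x\<bar> \<le> b * L ^ i"
  shows "\<bar>dj k (\<lambda>x. v x * w x) x\<bar> \<le> 2 ^ k * a * b * L ^ k"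
  using assms(2-)
proof (induction k arbitrary: v w a b x)
  case 0
  then have "\<bar>v x\<bar> \<le> a" "\<bar>w x\<bar> \<le> b"
    by (metis dj_0 le0 power_0 mult_1_right)+
  then show ?case
    by (simp add: abs_mult mult_mono')
next
  case (Suc k)
  have sv: "smooth_fun (deriv v)" and sw: "smooth_fun (deriv w)"
    using Suc.prems smooth_fun_deriv by auto
  have split: "dj (Suc k) (\<lambda>x. v x * w x) x
      = dj k (\<lambda>x. deriv v x * w x) x + dj k (\<lambda>x. v x * deriv w x) x"
    using Suc.prems sv sw by (simp add: dj_Suc_right deriv_mult_smooth dj_add smooth_fun_mult)
  have dv: "\<forall>i\<le>k. \<forall>x. \<bar>dj i (deriv v) x\<bar> \<le> (a * L) * L ^ i"
    using Suc.prems(3) by (metis Suc_le_mono dj_Suc_right mult.assoc power_Suc dj_dj)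
  have dw: "\<forall>i\<le>k. \<forall>x. \<bar>dj i (deriv w) x\<bar> \<le> (b * L) * L ^ i"
    using Suc.prems(4) by (metis Suc_le_mono dj_Suc_right mult.assoc power_Suc dj_dj)
  have "\<bar>dj k (\<lambda>x. deriv v x * w x) x\<bar> \<le> 2 ^ k * (a * L) * b * L ^ k"
    using Suc.IH[OF sv Suc.prems(2) dv] Suc.prems(4) by simp
  moreover have "\<bar>dj k (\<lambda>x. v x * deriv w x) x\<bar> \<le> 2 ^ k * a * (b * L) * L ^ k"
    using Suc.IH[OF Suc.prems(1) sw _ dw] Suc.prems(3) by simp
  ultimately show ?case
    unfolding split by (simp add: algebra_simps)
qed

section \<open>Derivatives of ln (1 + u) for a small smooth u\<close>

text \<open>The recursion comes from \<open>(1/(1+u))' = -u' (1/(1+u))\<^sup>2\<close> and \<open>abs_dj_mult_le\<close>.\<close>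
fun recip_const :: "nat \<Rightarrow> real" where
  "recip_const 0 = 2"
| "recip_const (Suc n) = recip_const n + 4 ^ n * recip_const n ^ 2"

lemma recip_const_ge_2: "recip_const n \<ge> 2"
  by (induction n) (auto intro!: add_increasing2)

lemma recip_const_mono: "m \<le> n \<Longrightarrow> recip_const m \<le> recip_const n"
proof (induction n)
  case 0
  then show ?case by simp
next
  case (Suc n)
  then show ?case
    by (cases "m = Suc n") (auto simp: le_Suc_eq intro: order_trans)
qed

locale small_smooth =
  fixes u :: "real \<Rightarrow> real" and B L :: real and N :: nat
  assumes smooth: "smooth_fun u"
    and B_nonneg: "0 \<le> B" and B_le: "B \<le> 1/2" and L_nonneg: "0 \<le> L"
    and abs_le: "\<And>x. \<bar>u x\<bar> \<le> B"
    and abs_dj_le: "\<And>i x. 1 \<le> i \<Longrightarrow> i \<le> N \<Longrightarrow> \<bar>dj i u x\<bar> \<le> B * L ^ i"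
begin

definition recip :: "real \<Rightarrow> real" where
  "recip x = 1 / (1 + u x)"

definition ln1p :: "real \<Rightarrow> real" where
  "ln1p x = ln (1 + u x)"

lemma one_plus_ge: "1 + u x \<ge> 1/2"
  using abs_le[of x] B_le by auto

lemma neg_deriv_smooth: "smooth_fun (\<lambda>x. - deriv u x)"
  using smooth_fun_cmult[of "deriv u" "-1"] smooth_fun_deriv[OF smooth] by simp

lemma dj_deriv_le: "i < N \<Longrightarrow> \<bar>dj i (deriv u) x\<bar> \<le> (B * L) * L ^ i"
  using abs_dj_le[of "Suc i" x] by (simp add: dj_Suc_right mult.assoc)

lemma has_real_derivative_recip:
  "(recip has_real_derivative - deriv u x * (recip x * recip x)) (at x)"
proof -
  have "(recip has_real_derivative - deriv u x / (1 + u x)^2) (at x)"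
    unfolding recip_def using one_plus_ge[of x] smooth_fun_differentiable[OF smooth]
    by (auto intro!: derivative_eq_intros has_real_derivative_deriv simp: power2_eq_square)
  then show ?thesis
    by (simp add: recip_def power2_eq_square)
qed

lemma deriv_recip: "deriv recip = (\<lambda>x. - deriv u x * (recip x * recip x))"
  using has_real_derivative_recip by (intro ext DERIV_imp_deriv)

lemma recip_smooth: "smooth_fun recip"
proof (rule smooth_ring_smooth_fun)
  show "recip differentiable at x" for x
    using has_real_derivative_recip real_differentiable_def by blast
  show "deriv recip \<in> smooth_ring recip"
    unfolding deriv_recip
    by (intro smooth_ring.mult smooth_ring.smooth smooth_ring.generator neg_deriv_smooth)
qed (rule smooth_ring.generator)

lemma abs_dj_recip_le: "n \<le> N \<Longrightarrow> \<forall>k\<le>n. \<forall>x. \<bar>dj k recip x\<bar> \<le> recip_const n * L ^ k"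
proof (induction n)
  case 0
  have "\<bar>recip x\<bar> \<le> 2" for x
    using one_plus_ge[of x] by (auto simp: recip_def field_simps)
  then show ?case by simp
next
  case (Suc n)
  have IH: "\<forall>k\<le>n. \<forall>x. \<bar>dj k recip x\<bar> \<le> recip_const n * L ^ k"
    using Suc by simp
  have "\<bar>dj (Suc n) recip x\<bar> \<le> recip_const (Suc n) * L ^ Suc n" for x
  proof -
    have du: "\<forall>i\<le>n. \<forall>x. \<bar>dj i (\<lambda>x. - deriv u x) x\<bar> \<le> (B * L) * L ^ i"
      using dj_deriv_le Suc.prems dj_cmult[OF smooth_fun_deriv[OF smooth], of _ "-1"] by simp
    have "\<bar>dj i (\<lambda>x. recip x * recip x) x\<bar> \<le> (2 ^ n * recip_const n * recip_const n) * L ^ i"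
      if "i \<le> n" for i x
    proof -
      have "\<bar>dj i (\<lambda>x. recip x * recip x) x\<bar> \<le> 2 ^ i * recip_const n * recip_const n * L ^ i"
        using abs_dj_mult_le[OF L_nonneg recip_smooth recip_smooth] IH that by auto
      also have "\<dots> \<le> (2 ^ n * recip_const n * recip_const n) * L ^ i"
        using that recip_const_ge_2[of n] L_nonneg
        by (intro mult_right_mono) (auto intro: power_increasing)
      finally show ?thesis .
    qed
    then have "\<bar>dj n (\<lambda>x. - deriv u x * (recip x * recip x)) x\<bar>
        \<le> 2 ^ n * (B * L) * (2 ^ n * recip_const n * recip_const n) * L ^ n"
      by (intro abs_dj_mult_le[OF L_nonneg neg_deriv_smooth smooth_fun_mult[OF recip_smooth recip_smooth] du])
        auto
    also have "\<dots> = B * (4 ^ n * recip_const n ^ 2) * L ^ Suc n"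
    proof -
      have "(4::real) ^ n = 2 ^ n * 2 ^ n"
        by (metis power_mult_distrib num_double numeral_times_numeral)
      then show ?thesis
        by (simp add: power2_eq_square mult_ac)
    qed
    also have "\<dots> \<le> 1 * (4 ^ n * recip_const n ^ 2) * L ^ Suc n"
      using B_le L_nonneg by (intro mult_right_mono) auto
    also have "\<dots> \<le> recip_const (Suc n) * L ^ Suc n"
      using recip_const_ge_2[of n] L_nonneg by (intro mult_right_mono) auto
    finally show ?thesis
      by (simp add: dj_Suc_right deriv_recip)
  qed
  moreover have "\<bar>dj k recip x\<bar> \<le> recip_const (Suc n) * L ^ k" if "k \<le> n" for k x
  proof -
    have "recip_const n * L ^ k \<le> recip_const (Suc n) * L ^ k"
      using recip_const_mono[of n "Suc n"] L_nonneg by (intro mult_right_mono) auto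
    moreover have "\<bar>dj k recip x\<bar> \<le> recip_const n * L ^ k"
      using IH that by blast
    ultimately show ?thesis
      by linarith
  qed
  ultimately show ?case
    using le_Suc_eq by blast
qed

lemma has_real_derivative_ln1p: "(ln1p has_real_derivative deriv u x * recip x) (at x)"
  unfolding ln1p_def recip_def using one_plus_ge[of x] smooth_fun_differentiable[OF smooth]
  by (auto intro!: derivative_eq_intros has_real_derivative_deriv)

lemma deriv_ln1p: "deriv ln1p = (\<lambda>x. deriv u x * recip x)"
  using has_real_derivative_ln1p by (intro ext DERIV_imp_deriv)

lemma ln1p_smooth: "smooth_fun ln1p"
proof (rule smooth_funI_deriv)
  show "ln1p differentiable at x" for x
    using has_real_derivative_ln1p real_differentiable_def by blast
  show "smooth_fun (deriv ln1p)"
    unfolding deriv_ln1p by (rule smooth_fun_mult[OF smooth_fun_deriv[OF smooth] recip_smooth])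
qed

definition ln1p_const :: real where
  "ln1p_const = 2 + 2 ^ N * recip_const N"

lemma abs_ln1p_le: "\<bar>ln1p x\<bar> \<le> 2 * B"
proof -
  have "\<bar>ln (1 + u x) - u x\<bar> \<le> 2 * (u x)\<^sup>2"
    using abs_le[of x] B_le by (intro abs_ln_one_plus_x_minus_x_bound) auto
  moreover have "2 * (u x)\<^sup>2 = (2 * \<bar>u x\<bar>) * \<bar>u x\<bar>"
    by (simp add: power2_eq_square)
  moreover have "(2 * \<bar>u x\<bar>) * \<bar>u x\<bar> \<le> 1 * \<bar>u x\<bar>"
    using abs_le[of x] B_le by (intro mult_right_mono) auto
  ultimately show ?thesis
    using abs_le[of x] unfolding ln1p_def by linarith
qed

lemma abs_dj_ln1p_le:
  assumes "k \<le> N"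
  shows "\<bar>dj k ln1p x\<bar> \<le> ln1p_const * B * L ^ k"
proof (cases k)
  case 0
  have "2 * B \<le> ln1p_const * B"
    unfolding ln1p_const_def using B_nonneg recip_const_ge_2[of N] by (intro mult_right_mono) auto
  then show ?thesis
    using 0 abs_ln1p_le[of x] by simp
next
  case (Suc m)
  have "\<bar>dj k ln1p x\<bar> = \<bar>dj m (\<lambda>x. deriv u x * recip x) x\<bar>"
    by (simp add: Suc dj_Suc_right deriv_ln1p)
  also have "\<dots> \<le> 2 ^ m * (B * L) * recip_const N * L ^ m"
    using dj_deriv_le abs_dj_recip_le[of N] assms Suc
    by (intro abs_dj_mult_le[OF L_nonneg smooth_fun_deriv[OF smooth] recip_smooth]) auto
  also have "\<dots> = (2 ^ m * recip_const N) * (B * L ^ k)"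
    by (simp add: Suc algebra_simps)
  also have "\<dots> \<le> ln1p_const * (B * L ^ k)"
  proof (rule mult_right_mono)
    have "(2::real) ^ m \<le> 2 ^ N"
      using assms Suc by (intro power_increasing) auto
    then have "2 ^ m * recip_const N \<le> 2 ^ N * recip_const N"
      using recip_const_ge_2[of N] by (intro mult_right_mono) auto
    then show "2 ^ m * recip_const N \<le> ln1p_const"
      unfolding ln1p_const_def by linarith
  qed (use B_nonneg L_nonneg in auto)
  finally show ?thesis
    by (simp add: mult.assoc)
qed

end

lemma abs_sum_le_if_single_nonzero:
  fixes F :: "'a \<Rightarrow> real"
  assumes "finite I" "M \<ge> 0" "\<And>i. i \<in> I \<Longrightarrow> \<bar>F i\<bar> \<le> M"
    and "\<And>i j. i \<in> I \<Longrightarrow> j \<in> I \<Longrightarrow> F i \<noteq> 0 \<Longrightarrow> F j \<noteq> 0 \<Longrightarrow> i = j"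
  shows "\<bar>\<Sum>i\<in>I. F i\<bar> \<le> M"
proof (cases "\<exists>i\<in>I. F i \<noteq> 0")
  case False
  then show ?thesis
    using assms(2) by (simp add: sum.neutral)
next
  case True
  then obtain i where i: "i \<in> I" "F i \<noteq> 0" by blast
  have "(\<Sum>i\<in>I. F i) = F i + (\<Sum>j\<in>I - {i}. F j)"
    using assms(1) i by (simp add: sum.remove)
  also have "(\<Sum>j\<in>I - {i}. F j) = 0"
    using assms(4) i by (intro sum.neutral) blast
  finally show ?thesis
    using assms(3)[OF i(1)] by simp
qed

text \<open>Interpolation between the bound \<open>Q\<close> on \<open>F\<close> and the Lipschitz bound \<open>Q \<lambda>\<close>.\<close>
lemma abs_diff_le_powr_if_deriv_bounded:
  fixes F F' :: "real \<Rightarrow> real"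
  assumes deriv: "\<And>z. (F has_real_derivative F' z) (at z)"
    and bound: "\<And>z. \<bar>F z\<bar> \<le> Q" and deriv_bound: "\<And>z. \<bar>F' z\<bar> \<le> Q * lam"
    and "lam > 0" "0 < e" "e \<le> 1"
  shows "\<bar>F x - F y\<bar> \<le> 2 * Q * (lam * \<bar>x - y\<bar>) powr e"
proof -
  have Q: "Q \<ge> 0"
    using bound[of 0] by linarith
  define W where "W = lam * \<bar>x - y\<bar>"
  have "W \<ge> 0"
    unfolding W_def using \<open>lam > 0\<close> by simp
  have lipschitz: "\<bar>F x - F y\<bar> \<le> Q * W"
    using field_differentiable_bound[of UNIV F F' "Q * lam" x y] deriv deriv_bound
    by (simp add: W_def mult.assoc)
  show ?thesis
  proof (cases "W \<le> 1")
    case True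
    have "W \<le> W powr e"
      using powr_mono'[OF \<open>e \<le> 1\<close> \<open>W \<ge> 0\<close> True] \<open>W \<ge> 0\<close> by simp
    then have "Q * W \<le> Q * W powr e"
      using Q by (rule mult_left_mono)
    moreover have "0 \<le> Q * W powr e"
      using Q by simp
    ultimately have "Q * W \<le> 2 * Q * W powr e"
      by linarith
    then show ?thesis
      using lipschitz unfolding W_def by linarith
  next
    case False
    then have "1 \<le> W powr e"
      using \<open>0 < e\<close> by (intro ge_one_powr_ge_zero) auto
    then have "2 * Q * 1 \<le> 2 * Q * W powr e"
      using Q by (intro mult_left_mono) auto
    then show ?thesis
      using bound[of x] bound[of y] unfolding W_def by linarith
  qed
qed

lemma abs_add_powr_le:
  fixes a b p :: real
  assumes "p > 0"
  shows "\<bar>a + b\<bar> powr p \<le> 2 powr p * (\<bar>a\<bar> powr p + \<bar>b\<bar> powr p)"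
proof -
  have "\<bar>a + b\<bar> powr p \<le> (2 * max \<bar>a\<bar> \<bar>b\<bar>) powr p"
    using assms by (intro powr_mono2) auto
  also have "\<dots> = 2 powr p * max \<bar>a\<bar> \<bar>b\<bar> powr p"
    by (simp add: powr_mult)
  also have "max \<bar>a\<bar> \<bar>b\<bar> powr p \<le> \<bar>a\<bar> powr p + \<bar>b\<bar> powr p"
    by (cases "\<bar>a\<bar> \<le> \<bar>b\<bar>") (auto simp: max_def)
  finally show ?thesis
    by (simp add: mult_left_mono)
qed

text \<open>The constant depends on \<open>p\<close> only through the upper bound \<open>q\<close>.\<close>
lemma nn_integral_abs_add_powr_le:
  fixes a b w f :: "real \<Rightarrow> real"
  assumes [measurable]: "a \<in> borel_measurable borel" "w \<in> borel_measurable borel"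
    and w: "\<And>x. w x \<ge> 0" "(\<integral>\<^sup>+x. ennreal (w x) \<partial>lborel) = 1"
    and moment: "(\<integral>\<^sup>+x. ennreal (\<bar>a x\<bar> powr p * w x) \<partial>lborel) \<le> ennreal C"
    and b: "\<And>x. \<bar>b x\<bar> \<le> H" and f: "\<And>x. 0 \<le> f x" "\<And>x. f x \<le> c * w x"
    and "0 < p" "p \<le> q" "C \<ge> 0" "c \<ge> 0"
  shows "(\<integral>\<^sup>+x. ennreal (\<bar>a x + b x\<bar> powr p * f x) \<partial>lborel)
    \<le> ennreal (2 powr q * c * (C + max 1 H powr q))"
proof -
  define c1 where "c1 = 2 powr q * c"
  define c2 where "c2 = c1 * max 1 H powr q"
  have c: "c1 \<ge> 0" "c2 \<ge> 0"
    unfolding c1_def c2_def using \<open>c \<ge> 0\<close> by auto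
  have pointwise: "\<bar>a x + b x\<bar> powr p * f x \<le> c1 * (\<bar>a x\<bar> powr p * w x) + c2 * w x" for x
  proof -
    have "\<bar>b x\<bar> powr p \<le> max 1 H powr p"
      using b[of x] \<open>0 < p\<close> by (intro powr_mono2) auto
    also have "\<dots> \<le> max 1 H powr q"
      using \<open>p \<le> q\<close> by (intro powr_mono) auto
    finally have "\<bar>b x\<bar> powr p \<le> max 1 H powr q" .
    then have "2 powr p * (\<bar>a x\<bar> powr p + \<bar>b x\<bar> powr p) \<le> 2 powr q * (\<bar>a x\<bar> powr p + max 1 H powr q)"
      using \<open>p \<le> q\<close> by (intro mult_mono add_left_mono powr_mono) auto
    then have "\<bar>a x + b x\<bar> powr p \<le> 2 powr q * (\<bar>a x\<bar> powr p + max 1 H powr q)"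
      using abs_add_powr_le[OF \<open>0 < p\<close>, of "a x" "b x"] by linarith
    then have "\<bar>a x + b x\<bar> powr p * f x \<le> 2 powr q * (\<bar>a x\<bar> powr p + max 1 H powr q) * (c * w x)"
      using f[of x] by (intro mult_mono) auto
    then show ?thesis
      unfolding c1_def c2_def by (simp add: algebra_simps)
  qed
  have "(\<integral>\<^sup>+x. ennreal (\<bar>a x + b x\<bar> powr p * f x) \<partial>lborel)
      \<le> (\<integral>\<^sup>+x. ennreal c1 * ennreal (\<bar>a x\<bar> powr p * w x) + ennreal c2 * ennreal (w x) \<partial>lborel)"
  proof (rule nn_integral_mono)
    fix x
    have "ennreal (\<bar>a x + b x\<bar> powr p * f x) \<le> ennreal (c1 * (\<bar>a x\<bar> powr p * w x) + c2 * w x)"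
      using pointwise by (rule ennreal_leI)
    also have "\<dots> = ennreal c1 * ennreal (\<bar>a x\<bar> powr p * w x) + ennreal c2 * ennreal (w x)"
      using c w(1)[of x] by (simp add: ennreal_plus ennreal_mult)
    finally show "ennreal (\<bar>a x + b x\<bar> powr p * f x)
        \<le> ennreal c1 * ennreal (\<bar>a x\<bar> powr p * w x) + ennreal c2 * ennreal (w x)" .
  qed
  also have "\<dots> = ennreal c1 * (\<integral>\<^sup>+x. ennreal (\<bar>a x\<bar> powr p * w x) \<partial>lborel)
      + ennreal c2 * (\<integral>\<^sup>+x. ennreal (w x) \<partial>lborel)"
    by (simp add: nn_integral_add nn_integral_cmult)
  also have "\<dots> \<le> ennreal c1 * ennreal C + ennreal c2 * 1"
    unfolding w(2) using moment by (intro add_mono mult_left_mono) auto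
  also have "\<dots> = ennreal (2 powr q * c * (C + max 1 H powr q))"
    using c \<open>C \<ge> 0\<close> by (simp add: c1_def c2_def ennreal_plus ennreal_mult algebra_simps)
  finally show ?thesis .
qed

section \<open>The bump function\<close>

locale bump =
  fixes phi :: "real \<Rightarrow> real"
  assumes smooth: "smooth_fun phi"
    and vanishes: "\<forall>x. x \<notin> {1/4<..<3/4} \<longrightarrow> phi x = 0"
    and has_integral_zero: "(phi has_integral 0) UNIV"
    and square_has_integral_one: "((\<lambda>x. (phi x)^2) has_integral 1) UNIV"
begin

lemma dj_vanishes: "z < 1/4 \<or> z > 3/4 \<Longrightarrow> dj k phi z = 0"
proof (induction k arbitrary: z)
  case 0
  then show ?case using vanishes by auto
next
  case (Suc k)
  let ?S = "if z < 1/4 then {..<1/4} else {(3/4::real)<..}"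
  have "open ?S" "z \<in> ?S"
    using Suc.prems by auto
  moreover have "\<And>y. y \<in> ?S \<Longrightarrow> 0 = dj k phi y"
    using Suc.IH by (auto split: if_splits)
  ultimately have "(dj k phi has_real_derivative 0) (at z)"
    using has_field_derivative_transform_within_open[OF DERIV_const] by blast
  then show ?case
    by (simp add: dj_Suc DERIV_imp_deriv)
qed

lemma continuous_on_dj: "continuous_on S (dj k phi)"
  using smooth_fun_dj_differentiable[OF smooth]
  by (meson continuous_at_imp_continuous_on differentiable_imp_continuous_within)

lemma bdd_above_abs_dj: "bdd_above (range (\<lambda>x. \<bar>dj k phi x\<bar>))"
proof -
  have "bounded ((\<lambda>x. \<bar>dj k phi x\<bar>) ` {1/4..3/4})"
    by (intro compact_imp_bounded compact_continuous_image continuous_intros continuous_on_dj) auto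
  then obtain M where M: "\<And>x. x \<in> {1/4..3/4} \<Longrightarrow> \<bar>dj k phi x\<bar> \<le> M"
    unfolding bounded_real by fastforce
  have "\<bar>dj k phi x\<bar> \<le> max M 0" for x
    using M[of x] dj_vanishes[of x k] by (cases "x \<in> {1/4..3/4}") auto
  then show ?thesis
    by (intro bdd_aboveI2) blast
qed

lemma abs_dj_le_AA: "k \<le> rr beta + 1 \<Longrightarrow> \<bar>dj k phi x\<bar> \<le> AA phi beta"
proof -
  assume "k \<le> rr beta + 1"
  then have "supnorm (dj k phi) \<le> AA phi beta"
    unfolding AA_def by (intro Max_ge) auto
  moreover have "\<bar>dj k phi x\<bar> \<le> supnorm (dj k phi)"
    unfolding supnorm_def by (rule cSUP_upper[OF _ bdd_above_abs_dj]) auto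
  ultimately show ?thesis
    by linarith
qed

lemma AA_pos: "AA phi beta > 0"
proof -
  have "\<exists>x. phi x \<noteq> 0"
  proof (rule ccontr)
    assume "\<nexists>x. phi x \<noteq> 0"
    then have "(\<lambda>x. (phi x)^2) = (\<lambda>x. 0)"
      by auto
    then show False
      using square_has_integral_one has_integral_0 has_integral_unique by (metis zero_neq_one)
  qed
  then obtain x where "phi x \<noteq> 0" ..
  then show ?thesis
    using abs_dj_le_AA[of 0 beta x] by simp
qed

lemma integrable: "integrable lborel phi"
proof -
  have "integrable lborel (\<lambda>x. indicator {1/4..3/4::real} x *\<^sub>R phi x)"
    by (intro borel_integrable_compact) (auto simp: continuous_on_dj[of _ 0, simplified])
  moreover have "(\<lambda>x. indicator {1/4..3/4::real} x *\<^sub>R phi x) = phi"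
    using vanishes by (force simp: indicator_def)
  ultimately show ?thesis
    by simp
qed

lemma integrable_affine_comp: "c > 0 \<Longrightarrow> integrable lborel (\<lambda>x. phi (b + c * x))"
  using lborel_integrable_real_affine[OF integrable, of c b] by simp

lemma integral_affine_comp_zero: "c > 0 \<Longrightarrow> integral\<^sup>L lborel (\<lambda>x. phi (b + c * x)) = 0"
proof -
  assume "c > 0"
  have "integral\<^sup>L lborel phi = 0"
    using has_integral_integral_real[OF integrable] has_integral_zero has_integral_unique by blast
  moreover have "integral\<^sup>L lborel phi = c * integral\<^sup>L lborel (\<lambda>x. phi (b + c * x))"
    using lborel_integral_real_affine[of c phi b] \<open>c > 0\<close> by simp
  ultimately show ?thesis
    using \<open>c > 0\<close> by simp
qed

end

section \<open>Uniform parameters\<close>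

locale proposition1_setting = bump +
  fixes blo bhi alpha xi' :: real and omega :: "real \<Rightarrow> real"
    and Lt :: "real poly" and epst Ct Mt :: real
  assumes blo_pos: "0 < blo" and blo_less: "blo < bhi" and alpha_pos: "alpha > 0"
    and xi_pos: "xi' > 0"
    and omega_params: "valid_params \<lparr>gam = alpha / 4, lplus = ln (2 * xi'), Lp = Lt, eps = epst,
      Cc = Ct, alph = alpha, xi = xi', Mm = Mt\<rparr>"
    and omega_TT: "omega \<in> TT alpha xi'"
    and omega_HH: "\<forall>beta\<in>{blo..bhi}. omega \<in> HH beta \<lparr>gam = alpha / 4, lplus = ln (2 * xi'),
      Lp = Lt, eps = epst, Cc = Ct, alph = alpha, xi = xi', Mm = Mt\<rparr>"
begin

lemma epst_pos: "epst > 0" and Ct_pos: "Ct > 0" and Mt_pos: "Mt > 0"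
  using omega_params by (auto simp: valid_params_def)

lemma omega_eq_const: "\<bar>x\<bar> \<le> 3 * alpha / 4 \<Longrightarrow> omega x = 2 * xi'"
proof -
  assume "\<bar>x\<bar> \<le> 3 * alpha / 4"
  then have "x \<in> {- 3 * alpha / 4 .. 3 * alpha / 4}"
    by auto
  then show ?thesis
    using omega_TT unfolding TT_def by blast
qed

text \<open>
  \<open>K_log\<close> dominates \<open>small_smooth.ln1p_const\<close> for every \<open>\<beta> \<le> bhi\<close>; \<open>H_log\<close> bounds the
  derivatives of \<open>ln (1 + u)\<close> of order at most \<open>r\<close> and \<open>L_log\<close> is the Hoelder constant of the
  \<open>r\<close>-th one. The exponent \<open>p_max\<close> dominates all exponents occurring in the moment conditions.
\<close>
definition "N_max = rr bhi + 1"
definition "K_log = 2 + 2 ^ N_max * recip_const N_max"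
definition "H_log = K_log / 2 * max 1 (1 / alpha) ^ N_max"
definition "L_log = K_log * max 1 (1 / alpha) powr bhi"
definition "p_max = 2 * bhi + epst + 2 + epst / blo"
definition "C_new = 2 powr p_max * (3/2) * (Ct + max 1 H_log powr p_max + max 1 L_log powr p_max)"

definition "P_new = \<lparr>gam = alpha / 4, lplus = ln (2 * xi') + H_log, Lp = Lt + [:L_log:],
  eps = epst, Cc = C_new, alph = alpha, xi = xi', Mm = 3/2 * Mt\<rparr>"

lemma K_log_pos: "K_log > 0"
  unfolding K_log_def using recip_const_ge_2[of N_max] by (simp add: add_pos_nonneg)

lemma L_log_pos: "L_log > 0"
  unfolding L_log_def using K_log_pos by simp

lemma P_new_valid: "valid_params P_new"
  unfolding P_new_def valid_params_def C_new_def using alpha_pos xi_pos epst_pos Ct_pos Mt_pos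
  by (simp add: add_pos_nonneg)

end

section \<open>A single perturbed density\<close>

locale perturbed_density = proposition1_setting +
  fixes D :: nat and beta :: real and theta :: "nat \<Rightarrow> bool"
  assumes D_pos: "D > 0" and D_even: "even D" and beta_range: "beta \<in> {blo..bhi}"
begin

definition "r = rr beta"
definition "A = AA phi beta"
definition "lam = real D / alpha"
definition "amp = real D powr (- beta) / 2"
definition "shift j = real D / 2 - (real j - 1)"
definition "u = (\<lambda>x. \<Sum>j\<in>{1..D}. (if theta j then 1 else -1) * (amp / A) * phi (lam * x + shift j))"
definition "f = ftheta omega phi alpha xi' beta D theta"

lemma D_ge_2: "real D \<ge> 2"
  using D_pos D_even by (metis dvd_imp_le even_zero not_gr0 of_nat_le_iff of_nat_numeral)

lemma beta_pos: "beta > 0"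
  using beta_range blo_pos by auto

lemma r_less_beta: "real r < beta" and beta_minus_r_le_1: "beta - real r \<le> 1"
proof -
  have "\<lceil>beta\<rceil> \<ge> 1"
    using beta_pos by (simp add: one_le_ceiling)
  then have "real r = of_int \<lceil>beta\<rceil> - 1"
    unfolding r_def rr_def by simp
  then show "real r < beta" "beta - real r \<le> 1"
    using ceiling_correct[of beta] by auto
qed

lemma r_le_rr_bhi: "r \<le> rr bhi"
  unfolding r_def rr_def using ceiling_mono[of beta bhi] beta_range by (intro nat_mono) auto

lemma A_pos: "A > 0"
  unfolding A_def by (rule AA_pos)

lemma lam_pos: "lam > 0"
  unfolding lam_def using D_pos alpha_pos by simp

lemma amp_nonneg: "amp \<ge> 0" and amp_le_half: "amp \<le> 1/2"
proof -
  have "real D powr (- beta) \<le> real D powr 0"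
    using D_ge_2 beta_pos by (intro powr_mono) auto
  then show "amp \<ge> 0" "amp \<le> 1/2"
    unfolding amp_def using D_ge_2 by auto
qed

lemma f_eq: "f x = omega x + 2 * xi' * u x"
proof -
  have "phij phi alpha xi' beta D j x = 2 * xi' * (amp / A) * phi (lam * x + shift j)" for j
  proof -
    have "real D / alpha * (x + alpha / 2) - (real j - 1) = lam * x + shift j"
      unfolding lam_def shift_def using alpha_pos by (simp add: field_simps)
    then show ?thesis
      unfolding phij_def amp_def A_def by simp
  qed
  then show ?thesis
    unfolding f_def ftheta_def u_def by (simp add: sum_distrib_left mult_ac)
qed

lemma u_smooth: "smooth_fun u"
  unfolding u_def by (intro smooth_fun_sum smooth_fun_affine_comp smooth) auto

lemma dj_u:
  "dj k u x = (\<Sum>j\<in>{1..D}. (if theta j then 1 else -1) * (amp / A) * lam ^ k * dj k phi (lam * x + shift j))"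
proof -
  have "dj k u = (\<lambda>x. \<Sum>j\<in>{1..D}.
      dj k (\<lambda>y. ((if theta j then 1 else -1) * (amp / A)) * phi (lam * y + shift j)) x)"
    unfolding u_def by (intro dj_sum finite_atLeastAtMost smooth_fun_affine_comp[OF smooth])
  then show ?thesis
    by (simp only: dj_affine_comp[OF smooth])
qed

text \<open>The summands of \<open>u\<close> have disjoint supports, so only one of them contributes at any point.\<close>
lemma abs_dj_u_le: "k \<le> r + 1 \<Longrightarrow> \<bar>dj k u x\<bar> \<le> amp * lam ^ k"
  unfolding dj_u
proof (rule abs_sum_le_if_single_nonzero)
  assume "k \<le> r + 1"
  show "\<bar>(if theta j then 1 else -1) * (amp / A) * lam ^ k * dj k phi (lam * x + shift j)\<bar>
      \<le> amp * lam ^ k" for j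
  proof -
    have "\<bar>dj k phi (lam * x + shift j)\<bar> \<le> A"
      using abs_dj_le_AA \<open>k \<le> r + 1\<close> unfolding A_def r_def by blast
    then have "amp / A * lam ^ k * \<bar>dj k phi (lam * x + shift j)\<bar> \<le> amp / A * lam ^ k * A"
      using amp_nonneg A_pos lam_pos by (intro mult_left_mono) auto
    then show ?thesis
      using A_pos amp_nonneg lam_pos by (simp add: abs_mult)
  qed
next
  fix i j
  assume "(if theta i then 1 else -1) * (amp / A) * lam ^ k * dj k phi (lam * x + shift i) \<noteq> 0"
    and "(if theta j then 1 else -1) * (amp / A) * lam ^ k * dj k phi (lam * x + shift j) \<noteq> 0"
  then have "lam * x + shift i \<in> {1/4..3/4}" "lam * x + shift j \<in> {1/4..3/4}"
    using dj_vanishes by force+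
  then have "\<bar>real i - real j\<bar> < 1"
    unfolding shift_def by auto
  then show "i = j"
    by linarith
qed (use amp_nonneg lam_pos in auto)

lemma u_eq_0: "\<bar>x\<bar> \<ge> alpha / 2 \<Longrightarrow> u x = 0"
proof -
  assume x: "\<bar>x\<bar> \<ge> alpha / 2"
  have half: "lam * (alpha / 2) = real D / 2"
    unfolding lam_def using alpha_pos by simp
  have "lam * x + shift j < 1/4 \<or> lam * x + shift j > 3/4" if "j \<in> {1..D}" for j
  proof (cases "x \<le> - alpha / 2")
    case True
    then have "lam * x \<le> lam * (- alpha / 2)"
      using lam_pos by (intro mult_left_mono) auto
    then show ?thesis
      unfolding shift_def using half that by auto
  next
    case False
    then have "lam * x \<ge> lam * (alpha / 2)"
      using x lam_pos by (intro mult_left_mono) auto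
    then show ?thesis
      unfolding shift_def using half that by auto
  qed
  then show ?thesis
    unfolding u_def using dj_vanishes[of _ 0] by simp
qed

sublocale U: small_smooth u amp lam "r + 1"
  using u_smooth amp_nonneg amp_le_half lam_pos abs_dj_u_le[of 0] abs_dj_u_le
  by unfold_locales auto

lemma abs_dj_ln1p_le_K_log: "k \<le> r + 1 \<Longrightarrow> \<bar>dj k U.ln1p x\<bar> \<le> K_log * amp * lam ^ k"
proof -
  assume k: "k \<le> r + 1"
  have "r + 1 \<le> N_max"
    unfolding N_max_def using r_le_rr_bhi by simp
  then have "(2::real) ^ (r + 1) * recip_const (r + 1) \<le> 2 ^ N_max * recip_const N_max"
    using recip_const_ge_2[of "r + 1"] by (intro mult_mono power_increasing recip_const_mono) auto
  then have "U.ln1p_const \<le> K_log"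
    unfolding U.ln1p_const_def K_log_def by simp
  then have "U.ln1p_const * (amp * lam ^ k) \<le> K_log * (amp * lam ^ k)"
    using amp_nonneg lam_pos by (intro mult_right_mono) auto
  then show ?thesis
    using U.abs_dj_ln1p_le[OF k, of x] by (simp add: mult.assoc)
qed

text \<open>Here \<open>j \<le> r < \<beta>\<close> makes \<open>D\<^sup>-\<^sup>\<beta> (D/\<alpha>)\<^sup>j\<close> bounded uniformly in \<open>D\<close>.\<close>
lemma abs_dj_ln1p_le_H_log: "j \<le> r \<Longrightarrow> \<bar>dj j U.ln1p x\<bar> \<le> H_log"
proof -
  assume j: "j \<le> r"
  have "real D powr (- beta) * real D ^ j = real D powr (real j - beta)"
    using D_ge_2 by (simp add: powr_realpow[symmetric] powr_add[symmetric])
  also have "\<dots> \<le> real D powr 0"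
    using D_ge_2 j r_less_beta by (intro powr_mono) auto
  finally have D_pow: "real D powr (- beta) * real D ^ j \<le> 1"
    using D_ge_2 by simp
  have "(1 / alpha) ^ j \<le> max 1 (1 / alpha) ^ j"
    using alpha_pos by (intro power_mono) auto
  also have "\<dots> \<le> max 1 (1 / alpha) ^ N_max"
    unfolding N_max_def using j r_le_rr_bhi by (intro power_increasing) auto
  finally have alpha_pow: "(1 / alpha) ^ j \<le> max 1 (1 / alpha) ^ N_max" .
  have "amp * lam ^ j = (real D powr (- beta) * real D ^ j) * (1 / alpha) ^ j / 2"
    unfolding amp_def lam_def by (simp add: power_divide)
  also have "\<dots> \<le> 1 * max 1 (1 / alpha) ^ N_max / 2"
    using D_pow alpha_pow alpha_pos by (intro divide_right_mono mult_mono) auto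
  finally have "K_log * (amp * lam ^ j) \<le> K_log * (max 1 (1 / alpha) ^ N_max / 2)"
    using K_log_pos by (intro mult_left_mono) auto
  then show ?thesis
    using abs_dj_ln1p_le_K_log[of j x] j unfolding H_log_def by (simp add: mult.assoc)
qed

lemma ln1p_holder: "\<bar>dj r U.ln1p x - dj r U.ln1p y\<bar> \<le> L_log * \<bar>y - x\<bar> powr (beta - real r)"
proof -
  define Q where "Q = K_log * amp * lam ^ r"
  define e where "e = beta - real r"
  have "\<bar>dj r U.ln1p x - dj r U.ln1p y\<bar> \<le> 2 * Q * (lam * \<bar>x - y\<bar>) powr e"
  proof (rule abs_diff_le_powr_if_deriv_bounded)
    show "(dj r U.ln1p has_real_derivative dj (Suc r) U.ln1p z) (at z)" for z
      unfolding dj_Suc by (intro has_real_derivative_deriv smooth_fun_dj_differentiable U.ln1p_smooth)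
    show "\<bar>dj r U.ln1p z\<bar> \<le> Q" for z
      unfolding Q_def using abs_dj_ln1p_le_K_log[of r z] by simp
    show "\<bar>dj (Suc r) U.ln1p z\<bar> \<le> Q * lam" for z
      unfolding Q_def using abs_dj_ln1p_le_K_log[of "Suc r" z] by (simp add: algebra_simps)
    show "0 < e" "e \<le> 1"
      unfolding e_def using r_less_beta beta_minus_r_le_1 by auto
  qed (rule lam_pos)
  also have "2 * Q * (lam * \<bar>x - y\<bar>) powr e = K_log * alpha powr (- beta) * \<bar>x - y\<bar> powr e"
  proof -
    have "lam ^ r * (lam * \<bar>x - y\<bar>) powr e = lam powr beta * \<bar>x - y\<bar> powr e"
      using lam_pos by (simp add: e_def powr_realpow[symmetric] powr_mult powr_add[symmetric])
    also have "lam powr beta = real D powr beta * alpha powr (- beta)"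
      unfolding lam_def using alpha_pos by (simp add: powr_divide powr_minus_divide)
    finally have "lam ^ r * (lam * \<bar>x - y\<bar>) powr e
        = real D powr beta * alpha powr (- beta) * \<bar>x - y\<bar> powr e" .
    moreover have "real D powr (- beta) * real D powr beta = 1"
      using D_ge_2 by (simp add: powr_add[symmetric])
    ultimately show ?thesis
      unfolding Q_def amp_def by (simp add: algebra_simps)
  qed
  also have "\<dots> \<le> L_log * \<bar>x - y\<bar> powr e"
  proof -
    have "alpha powr (- beta) = (1 / alpha) powr beta"
      using alpha_pos by (simp add: powr_minus_divide powr_divide)
    also have "\<dots> \<le> max 1 (1 / alpha) powr beta"
      using alpha_pos beta_pos by (intro powr_mono2) auto
    also have "\<dots> \<le> max 1 (1 / alpha) powr bhi"
      using beta_range by (intro powr_mono) auto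
    finally show ?thesis
      unfolding L_log_def using K_log_pos by (intro mult_right_mono mult_left_mono) auto
  qed
  finally show ?thesis
    unfolding e_def by (simp add: abs_minus_commute)
qed

definition "ln_omega = (\<lambda>x. ln (omega x))"

lemma omega_in_HH: "omega \<in> HH beta \<lparr>gam = alpha / 4, lplus = ln (2 * xi'), Lp = Lt, eps = epst,
    Cc = Ct, alph = alpha, xi = xi', Mm = Mt\<rparr>"
  using omega_HH beta_range by blast

lemma omega_density: "is_density omega"
  and ln_omega_times_differentiable: "times_differentiable r ln_omega"
  and ln_omega_holder: "\<And>x y. \<bar>x - y\<bar> \<le> alpha / 4 \<Longrightarrow>
    \<bar>dj r ln_omega x - dj r ln_omega y\<bar> \<le> fact r * poly Lt x * \<bar>y - x\<bar> powr (beta - real r)"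
  and abs_dj_ln_omega_0_le: "\<And>j. j \<le> r \<Longrightarrow> \<bar>dj j ln_omega 0\<bar> \<le> ln (2 * xi')"
  and ln_omega_moment: "\<And>j. j \<in> {1..r} \<Longrightarrow>
    (\<integral>\<^sup>+x. ennreal (\<bar>dj j ln_omega x\<bar> powr ((2 * beta + epst) / real j) * omega x) \<partial>lborel) \<le> ennreal Ct"
  and Lt_moment: "(\<integral>\<^sup>+x. ennreal (\<bar>poly Lt x\<bar> powr (2 + epst / beta) * omega x) \<partial>lborel) \<le> ennreal Ct"
  and omega_le_psi: "\<And>x. omega x \<le> Mt * psi x"
  and omega_pos: "\<And>x. omega x > 0"
  and omega_mono: "mono_on {..< - alpha} omega"
  and omega_antimono: "antimono_on {alpha <..} omega"
  and omega_ge_xi: "\<And>x. x \<in> {- alpha .. alpha} \<Longrightarrow> omega x \<ge> xi'"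
  using omega_in_HH by (simp_all add: HH_def Let_def r_def ln_omega_def)

lemma omega_measurable: "omega \<in> borel_measurable borel"
  and omega_nn_integral: "(\<integral>\<^sup>+x. ennreal (omega x) \<partial>lborel) = 1"
  using omega_density unfolding is_density_def by blast+

text \<open>The Hoelder condition makes the \<open>r\<close>-th derivative continuous as well.\<close>
lemma isCont_dj_ln_omega: "j \<le> r \<Longrightarrow> isCont (dj j ln_omega) x"
proof (cases "j < r")
  case True
  then show ?thesis
    using ln_omega_times_differentiable differentiable_imp_continuous_within
    unfolding times_differentiable_def by blast
next
  case False
  assume "j \<le> r"
  with False have j: "j = r" by simp
  define e where "e = beta - real r"
  have "((\<lambda>y. dj r ln_omega y - dj r ln_omega x) \<longlongrightarrow> 0) (at x)"
  proof (rule Lim_null_comparison)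
    show "\<forall>\<^sub>F y in at x. norm (dj r ln_omega y - dj r ln_omega x) \<le> fact r * \<bar>poly Lt x\<bar> * \<bar>y - x\<bar> powr e"
      unfolding eventually_at
    proof (intro exI[of _ "alpha / 4"] conjI ballI impI)
      fix y :: real
      assume "y \<noteq> x \<and> dist y x < alpha / 4"
      then have "\<bar>x - y\<bar> \<le> alpha / 4"
        by (simp add: dist_real_def abs_minus_commute)
      then have "\<bar>dj r ln_omega x - dj r ln_omega y\<bar> \<le> fact r * poly Lt x * \<bar>y - x\<bar> powr e"
        using ln_omega_holder unfolding e_def by blast
      also have "\<dots> \<le> fact r * \<bar>poly Lt x\<bar> * \<bar>y - x\<bar> powr e"
        by (intro mult_right_mono mult_left_mono) auto
      finally show "norm (dj r ln_omega y - dj r ln_omega x) \<le> fact r * \<bar>poly Lt x\<bar> * \<bar>y - x\<bar> powr e"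
        by (simp add: abs_minus_commute)
    qed (use alpha_pos in simp)
    have "((\<lambda>y. \<bar>y - x\<bar> powr e) \<longlongrightarrow> 0) (at x)"
      using r_less_beta unfolding e_def
      by (intro tendsto_zero_powrI tendsto_eq_intros) (auto intro: tendsto_ident_at)
    then show "((\<lambda>y. fact r * \<bar>poly Lt x\<bar> * \<bar>y - x\<bar> powr e) \<longlongrightarrow> 0) (at x)"
      using tendsto_mult_right_zero by blast
  qed
  then show ?thesis
    unfolding j isCont_def by (rule LIM_zero_cancel)
qed

lemma dj_ln_omega_measurable: "j \<le> r \<Longrightarrow> dj j ln_omega \<in> borel_measurable borel"
  by (intro borel_measurable_continuous_onI continuous_at_imp_continuous_on ballI isCont_dj_ln_omega)

lemma f_cases: "(omega x = 2 * xi' \<and> f x = 2 * xi' * (1 + u x)) \<or> (u x = 0 \<and> f x = omega x)"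
proof (cases "\<bar>x\<bar> < alpha / 2")
  case True
  then show ?thesis
    using omega_eq_const[of x] alpha_pos by (auto simp: f_eq algebra_simps)
next
  case False
  then show ?thesis
    using u_eq_0[of x] by (simp add: f_eq)
qed

lemma abs_u_le_half: "\<bar>u x\<bar> \<le> 1/2"
  using U.abs_le[of x] amp_le_half by linarith

lemma f_pos: "f x > 0" and f_le: "f x \<le> 3/2 * omega x"
  using f_cases[of x] abs_u_le_half[of x] xi_pos omega_pos[of x] by (auto simp: abs_le_iff)

lemma f_eq_omega: "x < - alpha \<or> x > alpha \<Longrightarrow> f x = omega x"
  using f_eq u_eq_0 alpha_pos by auto

lemma f_ge_xi: "x \<in> {- alpha .. alpha} \<Longrightarrow> f x \<ge> xi'"
  using f_cases[of x] abs_u_le_half[of x] xi_pos omega_ge_xi[of x] by (auto simp: abs_le_iff)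

lemma f_le_psi: "f x \<le> 3/2 * Mt * psi x"
proof -
  have "f x \<le> 3/2 * omega x"
    by (rule f_le)
  also have "\<dots> \<le> 3/2 * (Mt * psi x)"
    using omega_le_psi[of x] by simp
  finally show ?thesis
    by simp
qed

lemma ln_f_eq: "(\<lambda>x. ln (f x)) = (\<lambda>x. ln_omega x + U.ln1p x)"
proof
  fix x
  show "ln (f x) = ln_omega x + U.ln1p x"
    using f_cases[of x] abs_u_le_half[of x] xi_pos
    by (auto simp: ln_omega_def U.ln1p_def ln_mult abs_le_iff)
qed

lemma dj_ln_f: "j \<le> r \<Longrightarrow> dj j (\<lambda>x. ln (f x)) = (\<lambda>x. dj j ln_omega x + dj j U.ln1p x)"
  unfolding ln_f_eq by (rule dj_add_times_differentiable[OF ln_omega_times_differentiable U.ln1p_smooth])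

lemma f_density: "is_density f"
proof -
  have u_fun: "u = (\<lambda>x. \<Sum>j\<in>{1..D}. (if theta j then 1 else -1) * (amp / A) * phi (shift j + lam * x))"
    unfolding u_def by (simp add: add.commute)
  have u_int: "integrable lborel u" "integral\<^sup>L lborel u = 0"
    unfolding u_fun using lam_pos
    by (auto simp: integral_sum integrable_affine_comp integral_affine_comp_zero)
  have omega_nonneg: "AE x in lborel. 0 \<le> omega x"
    using omega_pos by (simp add: less_imp_le)
  have omega_int: "integrable lborel omega"
    using omega_measurable omega_nn_integral
    by (intro integrableI_nn_integral_finite[OF _ omega_nonneg, of 1]) auto
  have "ennreal (integral\<^sup>L lborel omega) = 1"
    using nn_integral_eq_integral[OF omega_int omega_nonneg] omega_nn_integral by simp
  then have "integral\<^sup>L lborel omega = 1"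
    by (metis ennreal_1 ennreal_inj integral_nonneg_AE omega_nonneg zero_le_one)
  moreover have f_int: "integrable lborel f"
    unfolding f_eq[abs_def] using omega_int u_int by simp
  ultimately have "integral\<^sup>L lborel f = 1"
    unfolding f_eq[abs_def] using omega_int u_int by simp
  then have "(\<integral>\<^sup>+x. ennreal (f x) \<partial>lborel) = 1"
    using nn_integral_eq_integral[OF f_int] f_pos by (simp add: less_imp_le)
  moreover have "f \<in> borel_measurable borel"
    unfolding f_eq[abs_def] using omega_measurable u_int(1) by measurable
  ultimately show ?thesis
    unfolding is_density_def using f_pos less_imp_le by blast
qed

lemma ln_f_times_differentiable: "times_differentiable r (\<lambda>x. ln (f x))"
  unfolding times_differentiable_def
proof (intro allI impI)
  fix j x
  assume "j < r"
  then have "dj j ln_omega differentiable at x"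
    using ln_omega_times_differentiable unfolding times_differentiable_def by blast
  then show "dj j (\<lambda>x. ln (f x)) differentiable at x"
    using dj_ln_f[of j] \<open>j < r\<close> smooth_fun_dj_differentiable[OF U.ln1p_smooth]
    by (simp add: differentiable_add)
qed

lemma ln_f_holder:
  assumes "\<bar>x - y\<bar> \<le> alpha / 4"
  shows "\<bar>dj r (\<lambda>x. ln (f x)) x - dj r (\<lambda>x. ln (f x)) y\<bar>
    \<le> fact r * poly (Lt + [:L_log:]) x * \<bar>y - x\<bar> powr (beta - real r)"
proof -
  define T where "T = \<bar>y - x\<bar> powr (beta - real r)"
  have "\<bar>dj r (\<lambda>x. ln (f x)) x - dj r (\<lambda>x. ln (f x)) y\<bar>
      \<le> \<bar>dj r ln_omega x - dj r ln_omega y\<bar> + \<bar>dj r U.ln1p x - dj r U.ln1p y\<bar>"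
    using dj_ln_f[of r] by simp
  also have "\<dots> \<le> fact r * poly Lt x * T + L_log * T"
    using ln_omega_holder[OF assms] ln1p_holder[of x y] unfolding T_def by (intro add_mono) auto
  also have "L_log * T \<le> fact r * (L_log * T)"
    using L_log_pos mult_right_mono[OF fact_ge_1, of "L_log * T" r] by (simp add: T_def)
  finally show ?thesis
    unfolding T_def by (simp add: algebra_simps)
qed

lemma abs_dj_ln_f_0_le: "j \<le> r \<Longrightarrow> \<bar>dj j (\<lambda>x. ln (f x)) 0\<bar> \<le> ln (2 * xi') + H_log"
  using dj_ln_f[of j] abs_dj_ln_omega_0_le[of j] abs_dj_ln1p_le_H_log[of j 0] by fastforce

lemma exponent_le_p_max: "2 * beta + epst \<le> p_max" "2 + epst / beta \<le> p_max"
proof -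
  have "epst / beta \<le> epst / blo"
    using beta_range blo_pos epst_pos by (intro divide_left_mono) auto
  moreover have "0 \<le> epst" "0 \<le> epst / blo" "0 \<le> bhi" "beta \<le> bhi"
    using epst_pos blo_pos blo_less beta_range beta_pos by auto
  ultimately show "2 * beta + epst \<le> p_max" "2 + epst / beta \<le> p_max"
    unfolding p_max_def by linarith+
qed

lemma le_C_new: "2 powr p_max * (3/2) * (Ct + max 1 H powr p_max) \<le> C_new"
  if "H = H_log \<or> H = L_log" for H
  using that unfolding C_new_def by (auto intro!: mult_left_mono)

lemma ln_f_moment:
  assumes j: "j \<in> {1..r}"
  shows "(\<integral>\<^sup>+x. ennreal (\<bar>dj j (\<lambda>x. ln (f x)) x\<bar> powr ((2 * beta + epst) / real j) * f x) \<partial>lborel)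
    \<le> ennreal C_new"
proof -
  have "(2 * beta + epst) / real j \<le> 2 * beta + epst"
    using j beta_pos epst_pos by (simp add: divide_le_eq mult_le_cancel_left1)
  then have p: "0 < (2 * beta + epst) / real j" "(2 * beta + epst) / real j \<le> p_max"
    using j beta_pos epst_pos exponent_le_p_max(1) by auto
  have "(\<integral>\<^sup>+x. ennreal (\<bar>dj j ln_omega x + dj j U.ln1p x\<bar> powr ((2 * beta + epst) / real j) * f x) \<partial>lborel)
      \<le> ennreal (2 powr p_max * (3/2) * (Ct + max 1 H_log powr p_max))"
    using j abs_dj_ln1p_le_H_log f_pos f_le omega_pos Ct_pos
    by (intro nn_integral_abs_add_powr_le[OF dj_ln_omega_measurable omega_measurable _
          omega_nn_integral ln_omega_moment _ _ _ p]) (auto intro: less_imp_le)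
  also have "\<dots> \<le> ennreal C_new"
    by (intro ennreal_leI le_C_new) simp
  finally show ?thesis
    using dj_ln_f[of j] j by simp
qed

lemma L_new_moment:
  "(\<integral>\<^sup>+x. ennreal (\<bar>poly (Lt + [:L_log:]) x\<bar> powr (2 + epst / beta) * f x) \<partial>lborel) \<le> ennreal C_new"
proof -
  have Lt_measurable: "(\<lambda>x. poly Lt x) \<in> borel_measurable borel"
    by (intro borel_measurable_continuous_onI continuous_intros)
  have p: "0 < 2 + epst / beta" "2 + epst / beta \<le> p_max"
    using beta_pos epst_pos exponent_le_p_max(2) by (auto intro: add_pos_nonneg)
  have "(\<integral>\<^sup>+x. ennreal (\<bar>poly Lt x + L_log\<bar> powr (2 + epst / beta) * f x) \<partial>lborel)
      \<le> ennreal (2 powr p_max * (3/2) * (Ct + max 1 L_log powr p_max))"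
    using f_pos f_le omega_pos Ct_pos L_log_pos
    by (intro nn_integral_abs_add_powr_le[OF Lt_measurable omega_measurable _ omega_nn_integral Lt_moment _ _ _ p])
      (auto intro: less_imp_le)
  also have "\<dots> \<le> ennreal C_new"
    by (intro ennreal_leI le_C_new) simp
  finally show ?thesis
    by simp
qed

lemma f_in_HH: "f \<in> HH beta P_new"
  unfolding HH_def P_new_def Let_def mem_Collect_eq params.select_convs r_def[symmetric]
  using f_density ln_f_times_differentiable ln_f_holder abs_dj_ln_f_0_le ln_f_moment L_new_moment
    f_le_psi f_pos f_eq_omega omega_mono omega_antimono f_ge_xi
  by (auto simp: monotone_on_def intro: order_trans)

end

theorem proposition1:
  fixes blo bhi alpha xi' :: real and phi omega :: "real \<Rightarrow> real"
    and Lt :: "real poly" and epst Ct Mt :: real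
  assumes "0 < blo" "blo < bhi" "alpha > 0" "xi' > 0"
    and "smooth_fun phi"
    and "\<forall>x. x \<notin> {1/4 <..< 3/4} \<longrightarrow> phi x = 0"
    and "(phi has_integral 0) UNIV"
    and "((\<lambda>x. (phi x)^2) has_integral 1) UNIV"
    and "valid_params \<lparr>gam = alpha / 4, lplus = ln (2 * xi'), Lp = Lt, eps = epst, Cc = Ct,
                       alph = alpha, xi = xi', Mm = Mt\<rparr>"
    and "omega \<in> TT alpha xi'"
    and "\<forall>beta\<in>{blo..bhi}. omega \<in> HH beta \<lparr>gam = alpha / 4, lplus = ln (2 * xi'), Lp = Lt,
                       eps = epst, Cc = Ct, alph = alpha, xi = xi', Mm = Mt\<rparr>"
  shows "\<exists>P. valid_params P \<and>
           (\<forall>D::nat. D > 0 \<longrightarrow> even D \<longrightarrow>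
              (\<forall>beta\<in>{blo..bhi}. JJ omega phi alpha xi' beta D \<subseteq> HH beta P))"
proof -
  interpret proposition1_setting phi blo bhi alpha xi' omega Lt epst Ct Mt
    using assms by unfold_locales auto
  show ?thesis
  proof (intro exI[of _ P_new] conjI P_new_valid allI impI ballI subsetI)
    fix D :: nat and beta F
    assume "D > 0" "even D" "beta \<in> {blo..bhi}" "F \<in> JJ omega phi alpha xi' beta D"
    then obtain theta where "F = ftheta omega phi alpha xi' beta D theta"
      unfolding JJ_def by blast
    interpret perturbed_density phi blo bhi alpha xi' omega Lt epst Ct Mt D beta theta
      using \<open>D > 0\<close> \<open>even D\<close> \<open>beta \<in> {blo..bhi}\<close> by unfold_locales
    show "F \<in> HH beta P_new"
      using f_in_HH unfolding f_def \<open>F = _\<close> .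
  qed
qed

end
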